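(* Let $\mathbf{L}\in\{\mathbf{K}_D,\mathbf{KD}_D,\mathbf{KT}_D\}$. The weakening rules are admissible in $\mathsf{G}(\mathbf{L})$: for all finite multisets $\Gamma,\Delta$ and every formula $\lambda$, if $\mathsf{G}(\mathbf{L})\vdash\Gamma\Rightarrow\Delta$ then $\mathsf{G}(\mathbf{L})\vdash\Gamma\Rightarrow\Delta,\lambda$ and $\mathsf{G}(\mathbf{L})\vdash\lambda,\Gamma\Rightarrow\Delta$.
   Context: Language: fix a finite nonempty set $\mathsf{Agt}$ of agents and a countable set $\mathsf{Prop}$ of propositional variables; $\mathsf{Grp}$ is the set of nonempty subsets of $\mathsf{Agt}$. Formulas: $\alpha::=p\mid\bot\mid\alpha\wedge\alpha\mid\alpha\vee\alpha\mid\alpha\rightarrow\alpha\mid\neg\alpha\mid D_G\alpha$ ($p\in\mathsf{Prop}$, $G\in\mathsf{Grp}$). Outmost-boxed formula: one of the form $D_G\gamma$. Sequent calculi (sequents $\Gamma\Rightarrow\Delta$ are pairs of finite multisets; derivable = root of a finite tree built from initial sequents by rules): $\mathsf{G}(\mathbf{K}_D)$ has initial sequents $\Gamma,p\Rightarrow p,\Delta$ and $\bot,\Gamma\Rightarrow\Delta$; rules $(R\wedge)$ from $\Gamma\Rightarrow\Delta,\alpha_1$ and $\Gamma\Rightarrow\Delta,\alpha_2$ infer $\Gamma\Rightarrow\Delta,\alpha_1\wedge\alpha_2$; $(L\wedge)$ from $\alpha_1,\alpha_2,\Gamma\Rightarrow\Delta$ infer $\alpha_1\wedge\alpha_2,\Gamma\Rightarrow\Delta$;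 $(R\vee)$ from $\Gamma\Rightarrow\Delta,\alpha_1,\alpha_2$ infer $\Gamma\Rightarrow\Delta,\alpha_1\vee\alpha_2$; $(L\vee)$ from $\alpha_1,\Gamma\Rightarrow\Delta$ and $\alpha_2,\Gamma\Rightarrow\Delta$ infer $\alpha_1\vee\alpha_2,\Gamma\Rightarrow\Delta$; $(R\rightarrow)$ from $\alpha_1,\Gamma\Rightarrow\Delta,\alpha_2$ infer $\Gamma\Rightarrow\Delta,\alpha_1\rightarrow\alpha_2$; $(L\rightarrow)$ from $\Gamma\Rightarrow\Delta,\alpha_1$ and $\alpha_2,\Gamma\Rightarrow\Delta$ infer $\alpha_1\rightarrow\alpha_2,\Gamma\Rightarrow\Delta$; $(R\neg)$ from $\alpha,\Gamma\Rightarrow\Delta$ infer $\Gamma\Rightarrow\Delta,\neg\alpha$; $(L\neg)$ from $\Gamma\Rightarrow\Delta,\alpha$ infer $\neg\alpha,\Gamma\Rightarrow\Delta$; $(D_K)$: from $\alpha_1,\dots,\alpha_n\Rightarrow\beta$ ($n\ge0$) infer $\Sigma,D_{G_1}\alpha_1,\dots,D_{G_n}\alpha_n\Rightarrow D_G\beta,\Omega$ where all $G_i\subseteq G$, $\Sigma$ consists only of propositional variables, $\bot$, and $D_H\gamma$ with $H\not\subseteq G$, and $\Omega$ only of propositional variables, $\bot$, outmost-boxed formulas. $\mathsf{G}(\mathbf{KD}_D)$ adds $(D_D)$: from $\Gamma\Rightarrow$ with $\Gamma\neq\emptyset$ infer $\Sigma,D_{\{a\}}\Gamma\Rightarrow\Omega$,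 $\Sigma$ only propositional variables, $\bot$, $D_H\gamma$ with $H\neq\{a\}$; $\Omega$ only propositional variables, $\bot$, outmost-boxed formulas. $\mathsf{G}(\mathbf{KT}_D)$ adds to $\mathsf{G}(\mathbf{K}_D)$ $(D_T)$: from $D_G\alpha,\alpha,\Gamma\Rightarrow\Delta$ infer $D_G\alpha,\Gamma\Rightarrow\Delta$. *)

theory Defs
  imports Main "HOL-Library.Multiset"
begin

text \<open>Agents are the elements of a finite (nonempty, as every HOL type) type 'a;
  groups are nonempty sets of agents; propositional variables are natural numbers.\<close>

datatype 'a fm =
    Pr nat
  | Bot
  | Conj "'a fm" "'a fm"
  | Disj "'a fm" "'a fm"
  | Imp "'a fm" "'a fm"
  | Neg "'a fm"
  | Dbox "'a set" "'a fm"

fun wf :: "'a fm \<Rightarrow> bool" where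
  "wf (Pr p) = True"
| "wf Bot = True"
| "wf (Conj a b) = (wf a \<and> wf b)"
| "wf (Disj a b) = (wf a \<and> wf b)"
| "wf (Imp a b) = (wf a \<and> wf b)"
| "wf (Neg a) = wf a"
| "wf (Dbox G a) = (G \<noteq> {} \<and> wf a)"

definition is_atomic :: "'a fm \<Rightarrow> bool" where
  "is_atomic f \<longleftrightarrow> (\<exists>p. f = Pr p) \<or> f = Bot"

definition is_boxed :: "'a fm \<Rightarrow> bool" where
  "is_boxed f \<longleftrightarrow> (\<exists>H g. f = Dbox H g)"

definition omega_ok :: "'a fm multiset \<Rightarrow> bool" where
  "omega_ok \<Omega> \<longleftrightarrow> (\<forall>f\<in>#\<Omega>. is_atomic f \<or> is_boxed f)"

definition sigmaK_ok :: "'a set \<Rightarrow> 'a fm multiset \<Rightarrow> bool" where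
  "sigmaK_ok G \<Sigma> \<longleftrightarrow> (\<forall>f\<in>#\<Sigma>. is_atomic f \<or> (\<exists>H g. f = Dbox H g \<and> \<not> H \<subseteq> G))"

definition sigmaD_ok :: "'a \<Rightarrow> 'a fm multiset \<Rightarrow> bool" where
  "sigmaD_ok a \<Sigma> \<longleftrightarrow> (\<forall>f\<in>#\<Sigma>. is_atomic f \<or> (\<exists>H g. f = Dbox H g \<and> H \<noteq> {a}))"

datatype logic = LK | LKD | LKT

type_synonym 'a sequent = "'a fm multiset \<times> 'a fm multiset"

inductive derivable :: "logic \<Rightarrow> 'a fm multiset \<Rightarrow> 'a fm multiset \<Rightarrow> bool" for L where
  Ax: "derivable L (add_mset (Pr p) \<Gamma>) (add_mset (Pr p) \<Delta>)"
| BotL: "derivable L (add_mset Bot \<Gamma>) \<Delta>"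
| ConjR: "derivable L \<Gamma> (add_mset a1 \<Delta>) \<Longrightarrow> derivable L \<Gamma> (add_mset a2 \<Delta>)
          \<Longrightarrow> derivable L \<Gamma> (add_mset (Conj a1 a2) \<Delta>)"
| ConjL: "derivable L (add_mset a1 (add_mset a2 \<Gamma>)) \<Delta>
          \<Longrightarrow> derivable L (add_mset (Conj a1 a2) \<Gamma>) \<Delta>"
| DisjR: "derivable L \<Gamma> (add_mset a1 (add_mset a2 \<Delta>))
          \<Longrightarrow> derivable L \<Gamma> (add_mset (Disj a1 a2) \<Delta>)"
| DisjL: "derivable L (add_mset a1 \<Gamma>) \<Delta> \<Longrightarrow> derivable L (add_mset a2 \<Gamma>) \<Delta>
          \<Longrightarrow> derivable L (add_mset (Disj a1 a2) \<Gamma>) \<Delta>"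
| ImpR: "derivable L (add_mset a1 \<Gamma>) (add_mset a2 \<Delta>)
          \<Longrightarrow> derivable L \<Gamma> (add_mset (Imp a1 a2) \<Delta>)"
| ImpL: "derivable L \<Gamma> (add_mset a1 \<Delta>) \<Longrightarrow> derivable L (add_mset a2 \<Gamma>) \<Delta>
          \<Longrightarrow> derivable L (add_mset (Imp a1 a2) \<Gamma>) \<Delta>"
| NegR: "derivable L (add_mset a \<Gamma>) \<Delta> \<Longrightarrow> derivable L \<Gamma> (add_mset (Neg a) \<Delta>)"
| NegL: "derivable L \<Gamma> (add_mset a \<Delta>) \<Longrightarrow> derivable L (add_mset (Neg a) \<Gamma>) \<Delta>"
| DK: "derivable L (mset (map snd xs)) {#b#}
       \<Longrightarrow> (\<forall>x\<in>set xs. fst x \<subseteq> G)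
       \<Longrightarrow> sigmaK_ok G \<Sigma> \<Longrightarrow> omega_ok \<Omega>
       \<Longrightarrow> derivable L (\<Sigma> + mset (map (\<lambda>(H, g). Dbox H g) xs)) (add_mset (Dbox G b) \<Omega>)"
| DD: "L = LKD \<Longrightarrow> derivable L \<Gamma> {#} \<Longrightarrow> \<Gamma> \<noteq> {#}
       \<Longrightarrow> sigmaD_ok a \<Sigma> \<Longrightarrow> omega_ok \<Omega>
       \<Longrightarrow> derivable L (\<Sigma> + image_mset (Dbox {a}) \<Gamma>) \<Omega>"
| DT: "L = LKT \<Longrightarrow> derivable L (add_mset (Dbox G a) (add_mset a \<Gamma>)) \<Delta>
       \<Longrightarrow> derivable L (add_mset (Dbox G a) \<Gamma>) \<Delta>"

end

theory Submission
  imports Defs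
begin

text \<open>Induction on the weakening formula \<lambda>. A compound \<lambda> is introduced by its own
  left or right rule from weakenings by its immediate subformulas, e.g.
  \<open>\<Gamma> \<Rightarrow> \<Delta>, \<alpha>\<^sub>1\<close> and \<open>\<Gamma> \<Rightarrow> \<Delta>, \<alpha>\<^sub>2\<close> give \<open>\<Gamma> \<Rightarrow> \<Delta>, \<alpha>\<^sub>1 \<and> \<alpha>\<^sub>2\<close> by (R\<and>).
  Atoms and boxed formulas are pushed up the derivation instead: the
  contexts \<Sigma> and \<Omega> of the modal rules absorb them, except for a box
  \<open>D\<^sub>H \<gamma>\<close> on the left that the context \<Sigma> of (D_K) with \<open>H \<subseteq> G\<close>, or of (D_D) with
  \<open>H = {a}\<close>, does not admit. Such a box is made principal instead, which
  requires weakening the premise by \<gamma> on the left, available by induction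
  on \<lambda>.\<close>

lemma derivable_weaken_right_atomic_or_boxed:
  assumes "derivable L \<Gamma> \<Delta>" and "is_atomic lam \<or> is_boxed lam"
  shows "derivable L \<Gamma> (add_mset lam \<Delta>)"
  using assms(1)
proof (induction rule: derivable.induct)
  case (DK xs b G \<Sigma> \<Omega>)
  have "omega_ok (add_mset lam \<Omega>)"
    using assms(2) DK.hyps(4) by (simp add: omega_ok_def)
  from derivable.DK[OF DK.hyps(1-3) this] show ?case
    by (simp add: add_mset_commute)
next
  case (DD \<Gamma> a \<Sigma> \<Omega>)
  have "omega_ok (add_mset lam \<Omega>)"
    using assms(2) DD.hyps(5) by (simp add: omega_ok_def)
  from derivable.DD[OF DD.hyps(1-4) this] show ?case .
qed (auto simp: add_mset_commute[of lam] intro: derivable.intros)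

lemma derivable_weaken_left_atomic_or_boxed:
  assumes "derivable L \<Gamma> \<Delta>"
    and "is_atomic lam \<or> (\<exists>H g. lam = Dbox H g \<and>
           (\<forall>\<Gamma> \<Delta>. derivable L \<Gamma> \<Delta> \<longrightarrow> derivable L (add_mset g \<Gamma>) \<Delta>))"
  shows "derivable L (add_mset lam \<Gamma>) \<Delta>"
  using assms(1)
proof (induction rule: derivable.induct)
  case (DK xs b G \<Sigma> \<Omega>)
  show ?case
  proof (cases "sigmaK_ok G (add_mset lam \<Sigma>)")
    case True
    from derivable.DK[OF DK.hyps(1,2) True DK.hyps(4)] show ?thesis by simp
  next
    case False
    then have "\<not> (is_atomic lam \<or> (\<exists>H g. lam = Dbox H g \<and> \<not> H \<subseteq> G))"
      using DK.hyps(3) by (auto simp: sigmaK_ok_def)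
    then obtain H g where lam: "lam = Dbox H g" "H \<subseteq> G"
      and weaken_g: "\<forall>\<Gamma> \<Delta>. derivable L \<Gamma> \<Delta> \<longrightarrow> derivable L (add_mset g \<Gamma>) \<Delta>"
      using assms(2) by auto
    have "derivable L (mset (map snd ((H, g) # xs))) {#b#}"
      using weaken_g DK.hyps(1) by simp
    moreover have "\<forall>x\<in>set ((H, g) # xs). fst x \<subseteq> G"
      using DK.hyps(2) lam by auto
    ultimately show ?thesis
      using derivable.DK[OF _ _ DK.hyps(3,4)] lam by fastforce
  qed
next
  case (DD \<Gamma> a \<Sigma> \<Omega>)
  show ?case
  proof (cases "sigmaD_ok a (add_mset lam \<Sigma>)")
    case True
    from derivable.DD[OF DD.hyps(1-3) True DD.hyps(5)] show ?thesis by simp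
  next
    case False
    then have "\<not> (is_atomic lam \<or> (\<exists>H g. lam = Dbox H g \<and> H \<noteq> {a}))"
      using DD.hyps(4) by (auto simp: sigmaD_ok_def)
    then obtain g where lam: "lam = Dbox {a} g"
      and weaken_g: "\<forall>\<Gamma> \<Delta>. derivable L \<Gamma> \<Delta> \<longrightarrow> derivable L (add_mset g \<Gamma>) \<Delta>"
      using assms(2) by auto
    have "derivable L (add_mset g \<Gamma>) {#}"
      using weaken_g DD.hyps(2) by simp
    from derivable.DD[OF DD.hyps(1) this _ DD.hyps(4,5)] show ?thesis
      using lam by simp
  qed
qed (auto simp: add_mset_commute[of lam] intro: derivable.intros)

lemma derivable_weaken:
  assumes "derivable L \<Gamma> \<Delta>"
  shows "derivable L \<Gamma> (add_mset lam \<Delta>) \<and> derivable L (add_mset lam \<Gamma>) \<Delta>"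
  using assms
proof (induction lam arbitrary: \<Gamma> \<Delta>)
  case (Pr p)
  have "is_atomic (Pr p)" by (simp add: is_atomic_def)
  then show ?case
    using derivable_weaken_right_atomic_or_boxed[OF Pr]
      derivable_weaken_left_atomic_or_boxed[OF Pr] by blast
next
  case Bot
  have "is_atomic Bot" by (simp add: is_atomic_def)
  then show ?case
    using derivable_weaken_right_atomic_or_boxed[OF Bot]
      derivable_weaken_left_atomic_or_boxed[OF Bot] by blast
next
  case (Dbox H g)
  have "is_boxed (Dbox H g)" by (simp add: is_boxed_def)
  then show ?case
    using derivable_weaken_right_atomic_or_boxed[OF Dbox.prems]
      derivable_weaken_left_atomic_or_boxed[OF Dbox.prems] Dbox.IH by blast
next
  case (Conj a1 a2)
  then show ?case by (blast intro: derivable.ConjR derivable.ConjL)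
next
  case (Disj a1 a2)
  then show ?case by (blast intro: derivable.DisjR derivable.DisjL)
next
  case (Imp a1 a2)
  then show ?case by (blast intro: derivable.ImpR derivable.ImpL)
next
  case (Neg a)
  then show ?case by (blast intro: derivable.NegR derivable.NegL)
qed

theorem proposition3p8:
  fixes L :: logic and \<Gamma> \<Delta> :: "('a::finite) fm multiset" and lam :: "'a fm"
  assumes "\<forall>f\<in>#\<Gamma> + \<Delta>. wf f" and "wf lam"
    and "derivable L \<Gamma> \<Delta>"
  shows "derivable L \<Gamma> (add_mset lam \<Delta>) \<and> derivable L (add_mset lam \<Gamma>) \<Delta>"
  using derivable_weaken[OF assms(3)] .

end
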